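(* Let $a\geq 3$ be an integer. There is a bijective correspondence between pyramids of size $m\geq 1$ (with bottom piece covering $]0,a[$) and finite sequences $(p_1,p_2,\dots,p_r)$, $r\geq 1$, of pyramids together with integers $s_1,\dots,s_r$ such that $p_i$ is a right $s_i$-pyramid if $i$ is odd and a left $s_i$-pyramid if $i$ is even, $|p_1|+\dots+|p_r|=m$, $s_1=0$, and $$1\leq s_{i+1}-s_i\leq a-1 \text{ if } i \text{ is odd},\qquad 1\leq s_i-s_{i+1}\leq a-1 \text{ if } i \text{ is even}.$$
   Context: A piece is an open interval $]s,s+a[$ of the real line with $s\in\mathbb Z$; two pieces are concurrent iff their intervals intersect. A heap (in the sense of Viennot) is a finite configuration obtained by successively dropping pieces vertically towards the horizontal axis: each dropped piece comes to rest on the axis or on top of the highest previously placed piece whose interval intersects its own; configurations (not dropping orders) are what is counted. A heap is a pyramid if it has a unique bottom (minimal) piece, i.e. exactly one piece rests on the axis. The size $|p|$ is the number of pieces. A pyramid $p$ is a right $s$-pyramid if its bottom piece covers $]s,s+a[$ and is a leftmost piece of $p$ (no piece of $p$ covers $]t,t+a[$ with $t<s$); it is a left $s$-pyramid if its bottom piece covers $]s-a,s[$ and is a rightmost piece of $p$ (no piece of $p$ covers $]t-a,t[$ with $t>s$). *)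

theory Defs
  imports Main
begin

text \<open>A piece is encoded as a pair (s, h): it covers the open interval ]s, s+a[ and
  sits at level h (h = 0 means resting on the axis).\<close>

type_synonym piece = "int \<times> nat"
type_synonym heap = "piece set"

definition concurrent :: "int \<Rightarrow> int \<Rightarrow> int \<Rightarrow> bool" where
  "concurrent a s t \<longleftrightarrow> \<bar>s - t\<bar> < a"

text \<open>Configurations obtainable by dropping pieces: concurrent pieces lie at distinct
  levels, and every piece above the axis rests on a concurrent piece one level below.\<close>

definition is_heap :: "int \<Rightarrow> heap \<Rightarrow> bool" where
  "is_heap a H \<longleftrightarrow> finite H \<and>
     (\<forall>s h t k. (s, h) \<in> H \<and> (t, k) \<in> H \<and> (s, h) \<noteq> (t, k) \<and> concurrent a s t \<longrightarrow> h \<noteq> k) \<and>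
     (\<forall>s h. (s, h) \<in> H \<and> h > 0 \<longrightarrow> (\<exists>t. (t, h - 1) \<in> H \<and> concurrent a s t))"

definition pyramid :: "int \<Rightarrow> heap \<Rightarrow> bool" where
  "pyramid a H \<longleftrightarrow> is_heap a H \<and> (\<exists>!x. x \<in> H \<and> snd x = 0)"

definition right_pyramid :: "int \<Rightarrow> heap \<Rightarrow> int \<Rightarrow> bool" where
  "right_pyramid a p s \<longleftrightarrow> pyramid a p \<and> (s, 0) \<in> p \<and> (\<forall>t h. (t, h) \<in> p \<longrightarrow> s \<le> t)"

definition left_pyramid :: "int \<Rightarrow> heap \<Rightarrow> int \<Rightarrow> bool" where
  "left_pyramid a p s \<longleftrightarrow> pyramid a p \<and> (s - a, 0) \<in> p \<and> (\<forall>t h. (t, h) \<in> p \<longrightarrow> t \<le> s - a)"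

text \<open>Sequences (p_1,s_1),...,(p_r,s_r) of the statement, 0-indexed: index i here is
  index i+1 in the paper, so "i odd" in the paper becomes "even i" here.\<close>
definition pyr_sequences :: "int \<Rightarrow> nat \<Rightarrow> (heap \<times> int) list set" where
  "pyr_sequences a m = {xs. length xs \<ge> 1 \<and>
     (\<forall>i < length xs. if even i then right_pyramid a (fst (xs ! i)) (snd (xs ! i))
                                else left_pyramid a (fst (xs ! i)) (snd (xs ! i))) \<and>
     (\<Sum>x\<leftarrow>xs. card (fst x)) = m \<and>
     snd (xs ! 0) = 0 \<and>
     (\<forall>i. i + 1 < length xs \<longrightarrow>
        (if even i then 1 \<le> snd (xs ! (i+1)) - snd (xs ! i) \<and> snd (xs ! (i+1)) - snd (xs ! i) \<le> a - 1
                   else 1 \<le> snd (xs ! i) - snd (xs ! (i+1)) \<and> snd (xs ! i) - snd (xs ! (i+1)) \<le> a - 1))}"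

definition pyramids_at0 :: "int \<Rightarrow> nat \<Rightarrow> heap set" where
  "pyramids_at0 a m = {p. pyramid a p \<and> (0, 0) \<in> p \<and> card p = m}"

end

theory Submission
  imports Defs "HOL-Library.Equipollence"
begin

text \<open>Levels are handled through the order ``is below'' of a heap: the level of a piece is the
  length of the longest chain below it, and conversely any finite set of pieces ordered compatibly
  with concurrency becomes a heap by placing each piece at its depth (this is dropping the pieces).

  Let \<open>P\<close> be a pyramid with bottom \<open>]c, c+a[\<close>, and let \<open>U\<close> be the set of pieces lying above some
  piece of \<open>P\<close> that starts left of \<open>c\<close>. Then \<open>P - U\<close> is a right \<open>c\<close>-pyramid, and if \<open>U\<close> is not
  empty, letting it fall gives a pyramid \<open>B\<close> whose bottom \<open>b\<close> satisfies \<open>c - a < b < c\<close>, because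
  its bottom piece rests on a piece outside \<open>U\<close>. Conversely, stacking such a \<open>B\<close> onto a right
  \<open>c\<close>-pyramid restores \<open>P\<close>. Reflecting \<open>B\<close> turns it into a pyramid with bottom \<open>-b-a\<close>, which by
  induction on the size corresponds to a sequence whose reflection starts with a left
  \<open>(b+a)\<close>-pyramid; prepending the right \<open>c\<close>-pyramid \<open>P - U\<close> gives the sequences of the statement.\<close>

section \<open>Depth in a finite graded relation\<close>

definition chains :: "'x set \<Rightarrow> ('x \<Rightarrow> 'x \<Rightarrow> bool) \<Rightarrow> 'x \<Rightarrow> 'x list set" where
  "chains X R x = {xs. xs \<noteq> [] \<and> set xs \<subseteq> X \<and> successively R xs \<and> last xs = x}"

definition depth :: "'x set \<Rightarrow> ('x \<Rightarrow> 'x \<Rightarrow> bool) \<Rightarrow> 'x \<Rightarrow> nat" where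
  "depth X R x = Max (length ` chains X R x) - 1"

definition graded_on :: "'x set \<Rightarrow> ('x \<Rightarrow> 'x \<Rightarrow> bool) \<Rightarrow> bool" where
  "graded_on X R \<longleftrightarrow> (\<exists>f::_ \<Rightarrow> nat. \<forall>x\<in>X. \<forall>y\<in>X. R x y \<longrightarrow> f x < f y)"

lemma distinct_chain:
  assumes "graded_on X R" "set xs \<subseteq> X" "successively R xs"
  shows "distinct xs"
proof -
  obtain f :: "_ \<Rightarrow> nat" where f: "\<forall>x\<in>X. \<forall>y\<in>X. R x y \<longrightarrow> f x < f y"
    using assms(1) unfolding graded_on_def by blast
  have "successively (\<lambda>x y. f x < f y) xs"
    using assms(3) by (rule successively_mono) (use f assms(2) in blast)
  then have "successively (<) (map f xs)" by (simp add: successively_map)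
  then have "sorted_wrt (<) (map f xs)"
    by (subst (asm) successively_conv_sorted_wrt) (auto simp: transp_def)
  then show ?thesis by (simp add: strict_sorted_iff distinct_map)
qed

lemma finite_chains:
  assumes "finite X" "graded_on X R"
  shows "finite (chains X R x)"
proof (rule finite_subset)
  show "chains X R x \<subseteq> {xs. set xs \<subseteq> X \<and> length xs \<le> card X}"
    using distinct_chain[OF assms(2)] assms(1)
    by (auto simp: chains_def intro: card_mono simp flip: distinct_card)
  show "finite {xs. set xs \<subseteq> X \<and> length xs \<le> card X}"
    using finite_lists_length_le[OF assms(1)] by simp
qed

lemma length_chain_le_depth:
  assumes "finite X" "graded_on X R" "xs \<in> chains X R x"
  shows "length xs - 1 \<le> depth X R x"
proof -
  have "length xs \<le> Max (length ` chains X R x)"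
    using finite_chains[OF assms(1,2)] assms(3) by (intro Max_ge) auto
  then show ?thesis unfolding depth_def by simp
qed

lemma longest_chainE:
  assumes "finite X" "graded_on X R" "x \<in> X"
  obtains xs where "xs \<in> chains X R x" "length xs = Suc (depth X R x)"
proof -
  have "[x] \<in> chains X R x" using assms(3) by (simp add: chains_def)
  then have "Max (length ` chains X R x) \<in> length ` chains X R x"
    using finite_chains[OF assms(1,2)] by (intro Max_in) auto
  then obtain xs where xs: "xs \<in> chains X R x" "length xs = Max (length ` chains X R x)"
    by auto
  moreover from xs have "length xs = Suc (depth X R x)"
    unfolding depth_def by (cases xs) (auto simp: chains_def)
  ultimately show ?thesis using that by blast
qed

lemma depth_strict_mono:
  assumes "finite X" "graded_on X R" "x \<in> X" "y \<in> X" "R y x"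
  shows "depth X R y < depth X R x"
proof -
  obtain ys where ys: "ys \<in> chains X R y" "length ys = Suc (depth X R y)"
    using longest_chainE[OF assms(1,2,4)] by blast
  have "ys @ [x] \<in> chains X R x"
    using ys(1) assms(3,5) by (auto simp: chains_def successively_append_iff)
  from length_chain_le_depth[OF assms(1,2) this] ys(2) show ?thesis by simp
qed

lemma depth_predecessor:
  assumes "finite X" "graded_on X R" "x \<in> X" "depth X R x > 0"
  obtains y where "y \<in> X" "R y x" "depth X R y = depth X R x - 1"
proof -
  obtain xs where xs: "xs \<in> chains X R x" "length xs = Suc (depth X R x)"
    using longest_chainE[OF assms(1-3)] by blast
  then have "xs = butlast xs @ [x]" "butlast xs \<noteq> []"
    using assms(4)
    by (auto simp: chains_def length_greater_0_conv[symmetric] simp del: length_greater_0_conv)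
  then obtain ys where ys: "xs = ys @ [x]" "ys \<noteq> []" by blast
  define y where "y = last ys"
  have yc: "ys \<in> chains X R y" and Ryx: "R y x" and yX: "y \<in> X"
    using xs(1) ys unfolding chains_def y_def by (auto simp: successively_append_iff)
  have "length ys - 1 \<le> depth X R y" by (rule length_chain_le_depth[OF assms(1,2) yc])
  moreover have "depth X R y < depth X R x" by (rule depth_strict_mono[OF assms(1-3) yX Ryx])
  moreover have "length ys = depth X R x" using xs(2) ys by simp
  ultimately show ?thesis using that yX Ryx by simp
qed

lemma depth_eq_0_iff:
  assumes "finite X" "graded_on X R" "x \<in> X"
  shows "depth X R x = 0 \<longleftrightarrow> (\<nexists>y. y \<in> X \<and> R y x)"
  using depth_strict_mono[OF assms] depth_predecessor[OF assms] by fastforce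

lemma chains_bij_betw:
  assumes bij: "bij_betw g X Y"
    and rel: "\<And>x y. x \<in> X \<Longrightarrow> y \<in> X \<Longrightarrow> R' (g x) (g y) \<longleftrightarrow> R x y"
    and x: "x \<in> X"
  shows "chains Y R' (g x) = map g ` chains X R x"
proof
  show "map g ` chains X R x \<subseteq> chains Y R' (g x)"
  proof
    fix ys assume "ys \<in> map g ` chains X R x"
    then obtain xs where xs: "xs \<in> chains X R x" "ys = map g xs" by blast
    then have X: "set xs \<subseteq> X" by (simp add: chains_def)
    have "successively (\<lambda>u v. R' (g u) (g v)) xs"
    proof (rule successively_mono)
      show "successively R xs" using xs(1) by (simp add: chains_def)
    qed (use X rel in blast)
    then show "ys \<in> chains Y R' (g x)"
      using xs X bij by (auto simp: chains_def successively_map last_map bij_betw_def)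
  qed
  show "chains Y R' (g x) \<subseteq> map g ` chains X R x"
  proof
    fix ys assume ys: "ys \<in> chains Y R' (g x)"
    define h where "h = inv_into X g"
    have hg: "\<And>y. y \<in> Y \<Longrightarrow> g (h y) = y \<and> h y \<in> X"
      using bij unfolding h_def by (auto simp: bij_betw_inv_into_right bij_betw_def inv_into_into)
    have Y: "set ys \<subseteq> Y" using ys by (simp add: chains_def)
    have "map g (map h ys) = ys" using Y hg by (induction ys) auto
    moreover have "successively R (map h ys)"
      unfolding successively_map
    proof (rule successively_mono)
      show "successively R' ys" using ys by (simp add: chains_def)
      fix u v assume "u \<in> set ys" "v \<in> set ys" "R' u v"
      with Y have "u \<in> Y" "v \<in> Y" "R' u v" by auto
      then show "R (h u) (h v)" using rel[of "h u" "h v"] hg by metis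
    qed
    moreover have "h (g x) = x" using bij x unfolding h_def by (simp add: bij_betw_inv_into_left)
    ultimately have "map h ys \<in> chains X R x"
      using ys hg by (auto simp: chains_def last_map)
    with \<open>map g (map h ys) = ys\<close> show "ys \<in> map g ` chains X R x" by (metis image_eqI)
  qed
qed

lemma depth_bij_betw:
  assumes "bij_betw g X Y" "\<And>x y. x \<in> X \<Longrightarrow> y \<in> X \<Longrightarrow> R' (g x) (g y) \<longleftrightarrow> R x y" "x \<in> X"
  shows "depth Y R' (g x) = depth X R x"
  using chains_bij_betw[of g X Y R' R x] assms unfolding depth_def by (simp add: image_image)

lemma chain_in_downward_closed:
  assumes "\<And>u v. u \<in> Y \<Longrightarrow> v \<in> X \<Longrightarrow> R v u \<Longrightarrow> v \<in> Y"
  shows "set xs \<subseteq> X \<Longrightarrow> successively R xs \<Longrightarrow> xs \<noteq> [] \<Longrightarrow> last xs \<in> Y \<Longrightarrow> set xs \<subseteq> Y"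
proof (induction xs)
  case (Cons x xs)
  then show ?case
    using assms by (cases xs) (auto simp: successively_Cons)
qed simp

lemma depth_downward_closed:
  assumes "Y \<subseteq> X" "\<And>u v. u \<in> Y \<Longrightarrow> v \<in> X \<Longrightarrow> R v u \<Longrightarrow> v \<in> Y" "x \<in> Y"
  shows "depth Y R x = depth X R x"
proof -
  have "chains Y R x = chains X R x"
    using assms chain_in_downward_closed[of Y X R] unfolding chains_def by fastforce
  then show ?thesis unfolding depth_def by simp
qed

section \<open>The order of a heap\<close>

lemma concurrent_refl: "a > 0 \<Longrightarrow> concurrent a s s"
  by (simp add: concurrent_def)

lemma concurrent_commute: "concurrent a s t \<longleftrightarrow> concurrent a t s"
  by (auto simp: concurrent_def)

definition below :: "int \<Rightarrow> heap \<Rightarrow> piece \<Rightarrow> piece \<Rightarrow> bool" where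
  "below a H u v \<longleftrightarrow> u \<in> H \<and> v \<in> H \<and> concurrent a (fst u) (fst v) \<and> snd u < snd v"

lemma graded_below: "graded_on H (below a H)"
  unfolding graded_on_def below_def by (rule exI[of _ snd]) auto

lemma below_subset_iff: "Q \<subseteq> H \<Longrightarrow> u \<in> Q \<Longrightarrow> v \<in> Q \<Longrightarrow> below a Q u v \<longleftrightarrow> below a H u v"
  by (auto simp: below_def)

lemma below_total:
  assumes "is_heap a H" "x \<in> H" "y \<in> H" "x \<noteq> y" "concurrent a (fst x) (fst y)"
  shows "below a H x y \<or> below a H y x"
proof -
  have "snd x \<noteq> snd y"
    using assms unfolding is_heap_def by (metis prod.collapse)
  then show ?thesis using assms(2,3,5) unfolding below_def by (auto simp: concurrent_commute)
qed

lemma heap_supportE: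
  assumes "is_heap a H" "x \<in> H" "snd x > 0"
  obtains t where "(t, snd x - 1) \<in> H" "below a H (t, snd x - 1) x"
proof -
  obtain t where "(t, snd x - 1) \<in> H" "concurrent a (fst x) t"
    using assms unfolding is_heap_def by (metis prod.collapse)
  with assms(2,3) show ?thesis
    using that by (auto simp: below_def concurrent_commute)
qed

lemma heap_chain_to_level:
  assumes "is_heap a H" "x \<in> H"
  shows "\<exists>xs\<in>chains H (below a H) x. length xs = Suc (snd x)"
  using assms(2)
proof (induction "snd x" arbitrary: x)
  case 0
  then have "[x] \<in> chains H (below a H) x" by (simp add: chains_def)
  with 0 show ?case by force
next
  case (Suc n)
  obtain t where t: "(t, n) \<in> H" "below a H (t, n) x"
    using heap_supportE[OF assms(1) Suc.prems] Suc.hyps(2) by (metis diff_Suc_1 zero_less_Suc)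
  then obtain xs where "xs \<in> chains H (below a H) (t, n)" "length xs = Suc n"
    using Suc.hyps(1)[of "(t, n)"] by auto
  then have "xs @ [x] \<in> chains H (below a H) x" "length (xs @ [x]) = Suc (snd x)"
    using t Suc by (auto simp: chains_def successively_append_iff)
  then show ?case by blast
qed

lemma chain_levels:
  "successively (below a H) xs \<Longrightarrow> xs \<noteq> [] \<Longrightarrow> length xs - 1 + snd (hd xs) \<le> snd (last xs)"
proof (induction xs)
  case (Cons x xs)
  then show ?case by (cases xs) (auto simp: below_def)
qed simp

lemma depth_below:
  assumes "is_heap a H" "x \<in> H"
  shows "depth H (below a H) x = snd x"
proof -
  have fin: "finite H" using assms(1) by (simp add: is_heap_def)
  obtain xs where xs: "xs \<in> chains H (below a H) x" "length xs = Suc (depth H (below a H) x)"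
    using longest_chainE[OF fin graded_below assms(2)] by blast
  have "length xs - 1 + snd (hd xs) \<le> snd (last xs)"
    using xs(1) by (intro chain_levels) (auto simp: chains_def)
  then have "depth H (below a H) x \<le> snd x" using xs by (simp add: chains_def)
  moreover have "snd x \<le> depth H (below a H) x"
    using heap_chain_to_level[OF assms] length_chain_le_depth[OF fin graded_below] by fastforce
  ultimately show ?thesis by simp
qed

lemma heap_bottom_below:
  assumes "is_heap a H" "x \<in> H"
  shows "\<exists>y\<in>H. snd y = 0 \<and> (below a H)\<^sup>*\<^sup>* y x"
  using assms(2)
proof (induction "snd x" arbitrary: x)
  case (Suc n)
  obtain t where t: "(t, n) \<in> H" "below a H (t, n) x"
    using heap_supportE[OF assms(1) Suc.prems] Suc.hyps(2) by (metis diff_Suc_1 zero_less_Suc)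
  then show ?case
    using Suc.hyps(1)[of "(t, n)"] by (auto intro: rtranclp.rtrancl_into_rtrancl)
qed auto

lemma pyramid_bottom_unique:
  assumes "pyramid a P" "(c, 0) \<in> P" "x \<in> P" "snd x = 0"
  shows "x = (c, 0)"
  using assms unfolding pyramid_def by (metis snd_conv)

lemma pyramid_below_bottom:
  assumes "pyramid a P" "(c, 0) \<in> P" "x \<in> P"
  shows "(below a P)\<^sup>*\<^sup>* (c, 0) x"
proof -
  have "is_heap a P" using assms(1) by (simp add: pyramid_def)
  then show ?thesis
    using heap_bottom_below pyramid_bottom_unique[OF assms(1,2)] assms(3) by blast
qed

lemma card_pyramid_ge_1: "pyramid a P \<Longrightarrow> card P \<ge> 1"
  unfolding pyramid_def is_heap_def
  by (metis One_nat_def Suc_leI card_gt_0_iff empty_iff)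

section \<open>Dropping pieces along an order\<close>

definition heap_of :: "'x set \<Rightarrow> ('x \<Rightarrow> int) \<Rightarrow> ('x \<Rightarrow> 'x \<Rightarrow> bool) \<Rightarrow> heap" where
  "heap_of X pos R = (\<lambda>x. (pos x, depth X R x)) ` X"

lemma heap_of_bij_betw:
  assumes "bij_betw g X Y"
    and "\<And>x y. x \<in> X \<Longrightarrow> y \<in> X \<Longrightarrow> R' (g x) (g y) \<longleftrightarrow> R x y"
    and "\<And>x. x \<in> X \<Longrightarrow> pos' (g x) = pos x"
  shows "heap_of Y pos' R' = heap_of X pos R"
proof -
  have "heap_of Y pos' R' = (\<lambda>x. (pos' (g x), depth Y R' (g x))) ` X"
    using assms(1) unfolding heap_of_def bij_betw_def by (auto simp: image_image)
  also have "\<dots> = heap_of X pos R"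
    unfolding heap_of_def using assms depth_bij_betw[of g X Y R' R] by (intro image_cong) auto
  finally show ?thesis .
qed

lemma heap_of_below: "is_heap a H \<Longrightarrow> heap_of H fst (below a H) = H"
  unfolding heap_of_def by (simp add: depth_below cong: image_cong)

locale drop_order =
  fixes a :: int and X :: "'x set" and pos :: "'x \<Rightarrow> int" and R :: "'x \<Rightarrow> 'x \<Rightarrow> bool"
  assumes a_pos: "a > 0" and finite_X: "finite X" and graded: "graded_on X R"
    and related_concurrent: "\<And>x y. x \<in> X \<Longrightarrow> y \<in> X \<Longrightarrow> R x y \<Longrightarrow> concurrent a (pos x) (pos y)"
    and concurrent_related:
      "\<And>x y. x \<in> X \<Longrightarrow> y \<in> X \<Longrightarrow> x \<noteq> y \<Longrightarrow> concurrent a (pos x) (pos y) \<Longrightarrow> R x y \<or> R y x"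
begin

abbreviation drop :: "'x \<Rightarrow> piece" where
  "drop x \<equiv> (pos x, depth X R x)"

lemma depth_neq_if_concurrent:
  assumes "x \<in> X" "y \<in> X" "x \<noteq> y" "concurrent a (pos x) (pos y)"
  shows "depth X R x \<noteq> depth X R y"
  using concurrent_related[OF assms] depth_strict_mono[OF finite_X graded] assms(1,2) by fastforce

lemma depth_less_iff:
  assumes "x \<in> X" "y \<in> X" "concurrent a (pos x) (pos y)"
  shows "depth X R x < depth X R y \<longleftrightarrow> R x y"
proof
  assume less: "depth X R x < depth X R y"
  then have "x \<noteq> y" by auto
  then show "R x y"
    using concurrent_related[OF assms(1,2) _ assms(3)] depth_strict_mono[OF finite_X graded assms(1,2)]
      less
    by fastforce
qed (rule depth_strict_mono[OF finite_X graded assms(2,1)])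

lemma inj_on_drop: "inj_on drop X"
  using depth_neq_if_concurrent concurrent_refl[OF a_pos] by (fastforce intro: inj_onI)

lemma card_heap_of: "card (heap_of X pos R) = card X"
  using inj_on_drop by (simp add: heap_of_def card_image)

lemma below_heap_of_iff:
  assumes "x \<in> X" "y \<in> X"
  shows "below a (heap_of X pos R) (drop x) (drop y) \<longleftrightarrow> R x y"
  using assms depth_less_iff[OF assms] related_concurrent[OF assms]
  by (auto simp: below_def heap_of_def)

lemma is_heap_heap_of: "is_heap a (heap_of X pos R)"
  unfolding is_heap_def
proof (intro conjI allI impI)
  show "finite (heap_of X pos R)" using finite_X by (simp add: heap_of_def)
next
  fix s h t k
  assume "(s, h) \<in> heap_of X pos R \<and> (t, k) \<in> heap_of X pos R \<and> (s, h) \<noteq> (t, k) \<and> concurrent a s t"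
  then obtain x y where "x \<in> X" "y \<in> X" "(s, h) = drop x" "(t, k) = drop y" "x \<noteq> y"
    "concurrent a (pos x) (pos y)"
    by (auto simp: heap_of_def)
  then show "h \<noteq> k" using depth_neq_if_concurrent by simp
next
  fix s h assume "(s, h) \<in> heap_of X pos R \<and> 0 < h"
  then obtain x where x: "x \<in> X" "s = pos x" "h = depth X R x" "h > 0"
    by (auto simp: heap_of_def)
  then obtain y where "y \<in> X" "R y x" "depth X R y = h - 1"
    using depth_predecessor[OF finite_X graded x(1)] by metis
  then show "\<exists>t. (t, h - 1) \<in> heap_of X pos R \<and> concurrent a s t"
    using related_concurrent[of y x] x
    by (auto simp: heap_of_def concurrent_commute intro!: exI[of _ "pos y"])
qed

end

definition settle :: "int \<Rightarrow> piece set \<Rightarrow> heap" where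
  "settle a S = heap_of S fst (below a S)"

lemma settle_heap: "is_heap a H \<Longrightarrow> settle a H = H"
  unfolding settle_def by (rule heap_of_below)

lemma drop_order_subset_heap:
  assumes "a > 0" "is_heap a H" "S \<subseteq> H"
  shows "drop_order a S fst (below a S)"
proof
  show "finite S" using assms(2,3) finite_subset by (auto simp: is_heap_def)
  show "\<And>x y. x \<in> S \<Longrightarrow> y \<in> S \<Longrightarrow> x \<noteq> y \<Longrightarrow> concurrent a (fst x) (fst y) \<Longrightarrow>
      below a S x y \<or> below a S y x"
    using below_total[OF assms(2)] below_subset_iff[OF assms(3)] assms(3) by blast
qed (use assms(1) graded_below in \<open>auto simp: below_def\<close>)

section \<open>Splitting a pyramid\<close>

definition left_upset :: "int \<Rightarrow> int \<Rightarrow> heap \<Rightarrow> heap" where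
  "left_upset a c P = {y \<in> P. \<exists>x\<in>P. fst x < c \<and> (below a P)\<^sup>*\<^sup>* x y}"

context
  fixes a c :: int and P :: heap
  assumes a_pos: "a > 0" and pyramid_P: "pyramid a P" and bottom_P: "(c, 0) \<in> P"
begin

private abbreviation U :: heap where "U \<equiv> left_upset a c P"

private lemma heap_P: "is_heap a P"
  using pyramid_P by (simp add: pyramid_def)

lemma left_upset_subset: "U \<subseteq> P"
  by (auto simp: left_upset_def)

lemma left_upset_upward_closed:
  assumes "y \<in> U" "below a P y z"
  shows "z \<in> U"
proof -
  obtain x where "x \<in> P" "fst x < c" "(below a P)\<^sup>*\<^sup>* x y"
    using assms(1) by (auto simp: left_upset_def)
  moreover have "z \<in> P" using assms(2) by (simp add: below_def)
  ultimately show ?thesis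
    using assms(2) by (auto simp: left_upset_def intro: rtranclp.rtrancl_into_rtrancl)
qed

lemma left_piece_in_left_upset: "x \<in> P \<Longrightarrow> fst x < c \<Longrightarrow> x \<in> U"
  unfolding left_upset_def by blast

lemma left_upset_empty_iff: "U = {} \<longleftrightarrow> (\<forall>x\<in>P. c \<le> fst x)"
  using left_piece_in_left_upset by (fastforce simp: left_upset_def)

lemma bottom_notin_left_upset: "(c, 0) \<notin> U"
proof
  assume "(c, 0) \<in> U"
  then obtain x where x: "fst x < c" "(below a P)\<^sup>*\<^sup>* x (c, 0)"
    unfolding left_upset_def by blast
  from x(2) show False
    by (cases rule: rtranclp.cases) (use x(1) in \<open>auto simp: below_def\<close>)
qed

lemma right_pyramid_diff_left_upset: "right_pyramid a (P - U) c"
  unfolding right_pyramid_def pyramid_def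
proof (intro conjI allI impI)
  show "is_heap a (P - U)"
    unfolding is_heap_def
  proof (intro conjI allI impI)
    show "finite (P - U)" using heap_P by (simp add: is_heap_def)
  next
    fix s h t k
    assume "(s, h) \<in> P - U \<and> (t, k) \<in> P - U \<and> (s, h) \<noteq> (t, k) \<and> concurrent a s t"
    then show "h \<noteq> k" using heap_P unfolding is_heap_def by blast
  next
    fix s h assume sh: "(s, h) \<in> P - U \<and> 0 < h"
    then obtain t where "(t, h - 1) \<in> P" "below a P (t, h - 1) (s, h)"
      using heap_supportE[OF heap_P, of "(s, h)"] by auto
    then show "\<exists>t. (t, h - 1) \<in> P - U \<and> concurrent a s t"
      using sh left_upset_upward_closed by (auto simp: below_def concurrent_commute)
  qed
  show bottom: "(c, 0) \<in> P - U" using bottom_P bottom_notin_left_upset by blast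
  show "\<exists>!x. x \<in> P - U \<and> snd x = 0"
    using bottom pyramid_bottom_unique[OF pyramid_P bottom_P] by (intro ex1I[of _ "(c, 0)"]) auto
  fix t h assume "(t, h) \<in> P - U"
  then show "c \<le> t" using left_piece_in_left_upset by force
qed

interpretation left_upset: drop_order a U fst "below a U"
  by (rule drop_order_subset_heap[OF a_pos heap_P left_upset_subset])

lemma minimal_in_left_upset_position:
  assumes q: "q \<in> U" and minimal: "\<nexists>z. z \<in> U \<and> below a U z q"
  shows "c - a < fst q \<and> fst q < c"
proof -
  obtain x where x: "x \<in> P" "fst x < c" "(below a P)\<^sup>*\<^sup>* x q"
    using q unfolding left_upset_def by blast
  have q_left: "fst q < c"
    using x(3)
  proof (cases rule: rtranclp.cases)
    case (rtrancl_into_rtrancl z)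
    then have "z \<in> U" "below a U z q"
      using x left_upset_subset q by (auto simp: left_upset_def below_def)
    then show ?thesis using minimal by blast
  qed (use x(2) in simp)
  then have "q \<noteq> (c, 0)" by auto
  then have "snd q > 0"
    using pyramid_bottom_unique[OF pyramid_P bottom_P] q left_upset_subset by blast
  then obtain t where t: "(t, snd q - 1) \<in> P" "below a P (t, snd q - 1) q"
    using heap_supportE[OF heap_P] q left_upset_subset by blast
  then have "(t, snd q - 1) \<notin> U" using minimal below_subset_iff[OF left_upset_subset] q by blast
  then have "c \<le> t" using left_piece_in_left_upset t(1) by force
  with q_left t(2) show ?thesis by (simp add: below_def concurrent_def)
qed

lemma card_settle_left_upset: "card (settle a U) = card U"
  unfolding settle_def by (rule left_upset.card_heap_of)

lemma pyramid_settle_left_upset: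
  assumes "U \<noteq> {}"
  obtains b where "c - a < b" "b < c" "(b, 0) \<in> settle a U" "pyramid a (settle a U)"
proof -
  have minimal: "\<nexists>z. z \<in> U \<and> below a U z q" and position: "c - a < fst q \<and> fst q < c"
    if "q \<in> U" "depth U (below a U) q = 0" for q
    using that depth_eq_0_iff[OF left_upset.finite_X left_upset.graded]
      minimal_in_left_upset_position by blast+
  have heap: "is_heap a (settle a U)" unfolding settle_def by (rule left_upset.is_heap_heap_of)
  obtain x where "x \<in> settle a U" using assms by (auto simp: settle_def heap_of_def)
  then obtain y where "y \<in> settle a U" "snd y = 0" using heap_bottom_below[OF heap] by blast
  then obtain q where q: "q \<in> U" "depth U (below a U) q = 0" and y: "y = (fst q, 0)"
    by (auto simp: settle_def heap_of_def)
  have unique: "q' = q" if "q' \<in> U" "depth U (below a U) q' = 0" for q'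
  proof (rule ccontr)
    assume "q' \<noteq> q"
    moreover have "concurrent a (fst q') (fst q)"
      using position[OF that] position[OF q] by (auto simp: concurrent_def abs_less_iff)
    ultimately have "below a U q' q \<or> below a U q q'"
      using left_upset.concurrent_related[OF that(1) q(1)] by blast
    then show False using minimal[OF that] minimal[OF q] that(1) q(1) by blast
  qed
  have "\<exists>!x. x \<in> settle a U \<and> snd x = 0"
  proof (rule ex1I[of _ y])
    show "y \<in> settle a U \<and> snd y = 0" using \<open>y \<in> settle a U\<close> \<open>snd y = 0\<close> by blast
    fix x assume "x \<in> settle a U \<and> snd x = 0"
    then obtain q' where "q' \<in> U" "depth U (below a U) q' = 0" "x = (fst q', 0)"
      by (auto simp: settle_def heap_of_def)
    then show "x = y" using unique y by blast
  qed
  with heap have "pyramid a (settle a U)" by (simp add: pyramid_def)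
  then show ?thesis using that position[OF q] \<open>y \<in> settle a U\<close> y by blast
qed

end

section \<open>Stacking a heap onto another\<close>

lemma Inl_in_Plus_iff [simp]: "Inl x \<in> A <+> B \<longleftrightarrow> x \<in> A"
  by auto

lemma Inr_in_Plus_iff [simp]: "Inr y \<in> A <+> B \<longleftrightarrow> y \<in> B"
  by auto

lemma bij_betw_map_sum:
  assumes "bij_betw f A C" "bij_betw g B D"
  shows "bij_betw (map_sum f g) (A <+> B) (C <+> D)"
  unfolding bij_betw_def
proof
  show "inj_on (map_sum f g) (A <+> B)"
    using assms unfolding bij_betw_def inj_on_def by (fastforce elim!: PlusE)
  have "map_sum f g ` (A <+> B) = Inl ` f ` A \<union> Inr ` g ` B"
    unfolding Plus_def by (simp add: image_Un image_image)
  then show "map_sum f g ` (A <+> B) = C <+> D"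
    using assms unfolding bij_betw_def Plus_def by simp
qed

lemma bij_betw_case_sum_diff: "T \<subseteq> S \<Longrightarrow> bij_betw (case_sum id id) ((S - T) <+> T) S"
  unfolding bij_betw_def inj_on_def Plus_def by (auto simp: image_Un image_image)

text \<open>Viennot's product of heaps: every piece of \<open>B\<close> comes after every concurrent piece of \<open>A\<close>,
  so \<open>B\<close> is dropped onto \<open>A\<close>.\<close>

fun stack_rel :: "int \<Rightarrow> heap \<Rightarrow> heap \<Rightarrow> piece + piece \<Rightarrow> piece + piece \<Rightarrow> bool" where
  "stack_rel a A B (Inl x) (Inl y) = below a A x y"
| "stack_rel a A B (Inr x) (Inr y) = below a B x y"
| "stack_rel a A B (Inl x) (Inr y) = (x \<in> A \<and> y \<in> B \<and> concurrent a (fst x) (fst y))"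
| "stack_rel a A B (Inr x) (Inl y) = False"

definition stack :: "int \<Rightarrow> heap \<Rightarrow> heap \<Rightarrow> heap" where
  "stack a A B = heap_of (A <+> B) (case_sum fst fst) (stack_rel a A B)"

lemma graded_stack_rel:
  assumes "finite A"
  shows "graded_on (A <+> B) (stack_rel a A B)"
proof -
  define f :: "piece + piece \<Rightarrow> nat" where "f = case_sum snd (\<lambda>y. snd y + Suc (Max (snd ` A)))"
  have "f u < f v" if "u \<in> A <+> B" "v \<in> A <+> B" "stack_rel a A B u v" for u v
  proof (cases u; cases v)
    fix x y assume "u = Inl x" "v = Inr y"
    then have "snd x \<le> Max (snd ` A)" using assms that by (intro Max_ge) auto
    with \<open>u = Inl x\<close> \<open>v = Inr y\<close> show ?thesis by (simp add: f_def)
  qed (use that in \<open>auto simp: f_def below_def\<close>)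
  then show ?thesis unfolding graded_on_def by blast
qed

lemma drop_order_stack:
  assumes "a > 0" "is_heap a A" "is_heap a B"
  shows "drop_order a (A <+> B) (case_sum fst fst) (stack_rel a A B)"
proof
  show "finite (A <+> B)" using assms(2,3) by (simp add: is_heap_def)
  show "graded_on (A <+> B) (stack_rel a A B)"
    using assms(2) by (intro graded_stack_rel) (simp add: is_heap_def)
  show "concurrent a (case_sum fst fst u) (case_sum fst fst v)"
    if "u \<in> A <+> B" "v \<in> A <+> B" "stack_rel a A B u v" for u v
    using that by (cases u; cases v) (auto simp: below_def)
  show "stack_rel a A B u v \<or> stack_rel a A B v u"
    if "u \<in> A <+> B" "v \<in> A <+> B" "u \<noteq> v" "concurrent a (case_sum fst fst u) (case_sum fst fst v)"
    for u v
    using that below_total[OF assms(2)] below_total[OF assms(3)]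
    by (cases u; cases v) (auto simp: concurrent_commute)
qed (rule assms(1))

lemma depth_stack_rel_Inl:
  assumes "is_heap a A" "x \<in> A"
  shows "depth (A <+> B) (stack_rel a A B) (Inl x) = snd x"
proof -
  have "depth (A <+> B) (stack_rel a A B) (Inl x) = depth (Inl ` A) (stack_rel a A B) (Inl x)"
  proof (rule depth_downward_closed[symmetric])
    fix u v assume "u \<in> Inl ` A" "v \<in> A <+> B" "stack_rel a A B v u"
    then show "v \<in> Inl ` A" by (cases v) auto
  qed (use assms(2) in auto)
  also have "\<dots> = depth A (below a A) x"
    by (rule depth_bij_betw) (auto simp: bij_betw_def assms(2))
  finally show ?thesis using depth_below[OF assms] by simp
qed

lemma stack_split_pyramid:
  assumes "a > 0" "pyramid a P" "(c, 0) \<in> P"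
  shows "stack a (P - left_upset a c P) (settle a (left_upset a c P)) = P"
proof -
  define U where "U = left_upset a c P"
  have heap: "is_heap a P" using assms(2) by (simp add: pyramid_def)
  have "U \<subseteq> P" using left_upset_subset[OF assms] by (simp add: U_def)
  interpret U: drop_order a U fst "below a U"
    by (rule drop_order_subset_heap[OF assms(1) heap \<open>U \<subseteq> P\<close>])
  have U_upward: "\<not> below a P y x" if "y \<in> U" "x \<in> P - U" for x y
    using left_upset_upward_closed[OF assms, of y x] that unfolding U_def by blast
  have "stack a (P - U) (settle a U) =
      heap_of ((P - U) <+> U) (case_sum fst fst) (stack_rel a (P - U) U)"
    unfolding stack_def settle_def
  proof (rule heap_of_bij_betw)
    show "bij_betw (map_sum id U.drop) ((P - U) <+> U) ((P - U) <+> heap_of U fst (below a U))"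
      using U.inj_on_drop by (intro bij_betw_map_sum) (auto simp: bij_betw_def heap_of_def)
    show "stack_rel a (P - U) (heap_of U fst (below a U)) (map_sum id U.drop u) (map_sum id U.drop v)
        \<longleftrightarrow> stack_rel a (P - U) U u v" if "u \<in> (P - U) <+> U" "v \<in> (P - U) <+> U" for u v
      using that U.below_heap_of_iff by (cases u; cases v) (auto simp: heap_of_def)
  qed (auto split: sum.split)
  also have "\<dots> = heap_of P fst (below a P)"
  proof (rule heap_of_bij_betw[symmetric])
    show "bij_betw (case_sum id id) ((P - U) <+> U) P" by (rule bij_betw_case_sum_diff[OF \<open>U \<subseteq> P\<close>])
    show "below a P (case_sum id id u) (case_sum id id v) \<longleftrightarrow> stack_rel a (P - U) U u v"
      if "u \<in> (P - U) <+> U" "v \<in> (P - U) <+> U" for u v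
    proof (cases u; cases v)
      fix x y assume uv: "u = Inl x" "v = Inr y"
      then have x: "x \<in> P - U" and y: "y \<in> U" using that by auto
      then have "x \<noteq> y" "y \<in> P" using \<open>U \<subseteq> P\<close> by auto
      then show ?thesis
        using uv x y below_total[OF heap, of x y] U_upward[OF y x] by (auto simp: below_def)
    qed (use that below_subset_iff[OF \<open>U \<subseteq> P\<close>] U_upward in \<open>auto simp: below_def\<close>)
  qed (auto split: sum.split)
  also have "\<dots> = P" by (rule heap_of_below[OF heap])
  finally show ?thesis by (simp add: U_def)
qed

context
  fixes a b c :: int and A B :: heap
  assumes a_pos: "a > 0" and right_A: "right_pyramid a A c" and pyramid_B: "pyramid a B"
    and bottom_B: "(b, 0) \<in> B" and b_between: "c - a < b" "b < c"
begin

private lemma pyramid_A: "pyramid a A" and bottom_A: "(c, 0) \<in> A"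
  using right_A by (auto simp: right_pyramid_def)

private lemma heap_A: "is_heap a A" and heap_B: "is_heap a B"
  using pyramid_A pyramid_B by (simp_all add: pyramid_def)

interpretation S: drop_order a "A <+> B" "case_sum fst fst" "stack_rel a A B"
  by (rule drop_order_stack[OF a_pos heap_A heap_B])

private lemma stack_eq: "stack a A B = S.drop ` (A <+> B)"
  by (simp add: stack_def heap_of_def)

private lemma drop_Inl: "x \<in> A \<Longrightarrow> S.drop (Inl x) = x"
  by (simp add: depth_stack_rel_Inl[OF heap_A])

private lemma below_stack_iff:
  "u \<in> A <+> B \<Longrightarrow> v \<in> A <+> B \<Longrightarrow> below a (stack a A B) (S.drop u) (S.drop v) \<longleftrightarrow> stack_rel a A B u v"
  unfolding stack_def by (rule S.below_heap_of_iff)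

lemma card_stack: "card (stack a A B) = card A + card B"
  using S.card_heap_of heap_A heap_B by (simp add: stack_def card_Plus is_heap_def)

lemma bottom_in_stack: "(c, 0) \<in> stack a A B"
proof -
  have "S.drop (Inl (c, 0)) \<in> stack a A B" using bottom_A unfolding stack_eq by blast
  then show ?thesis using drop_Inl[OF bottom_A] by simp
qed

text \<open>The bottom piece of \<open>B\<close> rests on the bottom piece \<open>(c, 0)\<close> of \<open>A\<close>, because \<open>c - a < b < c\<close>.\<close>

private lemma stack_rel_predecessor:
  assumes "w \<in> A <+> B" "w \<noteq> Inl (c, 0)"
  shows "\<exists>w'. w' \<in> A <+> B \<and> stack_rel a A B w' w"
proof (cases w)
  case (Inl x)
  then have "x \<in> A" "x \<noteq> (c, 0)" using assms by auto
  then have "snd x > 0" using pyramid_bottom_unique[OF pyramid_A bottom_A] by blast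
  then obtain t where "below a A (t, snd x - 1) x" using heap_supportE[OF heap_A \<open>x \<in> A\<close>] by blast
  then have "stack_rel a A B (Inl (t, snd x - 1)) w" "Inl (t, snd x - 1) \<in> A <+> B"
    using Inl by (auto simp: below_def)
  then show ?thesis by blast
next
  case (Inr y)
  then have "y \<in> B" using assms(1) by simp
  show ?thesis
  proof (cases "snd y = 0")
    case True
    then have "y = (b, 0)" using pyramid_bottom_unique[OF pyramid_B bottom_B \<open>y \<in> B\<close>] by blast
    then have "stack_rel a A B (Inl (c, 0)) w" "Inl (c, 0) \<in> A <+> B"
      using Inr \<open>y \<in> B\<close> bottom_A b_between by (auto simp: concurrent_def)
    then show ?thesis by blast
  next
    case False
    then obtain t where "below a B (t, snd y - 1) y" using heap_supportE[OF heap_B \<open>y \<in> B\<close>] by blast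
    then have "stack_rel a A B (Inr (t, snd y - 1)) w" "Inr (t, snd y - 1) \<in> A <+> B"
      using Inr by (auto simp: below_def)
    then show ?thesis by blast
  qed
qed

lemma pyramid_stack: "pyramid a (stack a A B)"
proof -
  have unique: "x = (c, 0)" if "x \<in> stack a A B" "snd x = 0" for x
  proof -
    have "x \<in> S.drop ` (A <+> B)" using that(1) stack_eq by simp
    then obtain w where w: "w \<in> A <+> B" "x = S.drop w" by (rule imageE)
    then have "depth (A <+> B) (stack_rel a A B) w = 0" using that(2) by simp
    then have "\<nexists>w'. w' \<in> A <+> B \<and> stack_rel a A B w' w"
      using depth_eq_0_iff[OF S.finite_X S.graded w(1)] by blast
    then have "w = Inl (c, 0)" using stack_rel_predecessor[OF w(1)] by blast
    then show ?thesis using w drop_Inl[OF bottom_A] by simp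
  qed
  have "\<exists>!x. x \<in> stack a A B \<and> snd x = 0"
  proof (rule ex1I[of _ "(c, 0)"])
    show "(c, 0) \<in> stack a A B \<and> snd (c, 0) = 0" using bottom_in_stack by simp
  qed (use unique in blast)
  moreover have "is_heap a (stack a A B)" unfolding stack_def by (rule S.is_heap_heap_of)
  ultimately show ?thesis by (simp add: pyramid_def)
qed

private lemma drop_Inr_in_left_upset:
  assumes "y \<in> B"
  shows "S.drop (Inr y) \<in> left_upset a c (stack a A B)"
proof -
  have "(below a B)\<^sup>*\<^sup>* (b, 0) y" by (rule pyramid_below_bottom[OF pyramid_B bottom_B assms])
  then show ?thesis
  proof induction
    case base
    have "S.drop (Inr (b, 0)) \<in> stack a A B" using bottom_B stack_eq by blast
    then show ?case
      using b_between left_piece_in_left_upset[OF a_pos pyramid_stack bottom_in_stack] by simp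
  next
    case (step u v)
    then have "u \<in> B" "v \<in> B" by (simp_all add: below_def)
    then have "below a (stack a A B) (S.drop (Inr u)) (S.drop (Inr v))"
      using below_stack_iff[of "Inr u" "Inr v"] step(2) by simp
    then show ?case
      using left_upset_upward_closed[OF a_pos pyramid_stack bottom_in_stack] step(3) by blast
  qed
qed

private lemma left_upset_stack: "left_upset a c (stack a A B) = S.drop ` Inr ` B"
proof
  show "left_upset a c (stack a A B) \<subseteq> S.drop ` Inr ` B"
  proof
    fix z assume "z \<in> left_upset a c (stack a A B)"
    then obtain x where x: "x \<in> stack a A B" "fst x < c" "(below a (stack a A B))\<^sup>*\<^sup>* x z"
      by (auto simp: left_upset_def)
    from x(3) show "z \<in> S.drop ` Inr ` B"
    proof induction
      case base
      obtain w where w: "w \<in> A <+> B" "x = S.drop w" using x(1) stack_eq by blast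
      have "w \<notin> Inl ` A" using w x(2) right_A drop_Inl by (force simp: right_pyramid_def)
      with w show ?case by (auto elim: PlusE)
    next
      case (step z z')
      then obtain y where y: "y \<in> B" "z = S.drop (Inr y)" by auto
      obtain w where w: "w \<in> A <+> B" "z' = S.drop w"
        using step(2) stack_eq by (auto simp: below_def)
      then have "stack_rel a A B (Inr y) w" using below_stack_iff[of "Inr y" w] step(2) y by simp
      with w show ?case by (cases w) force+
    qed
  qed
  show "S.drop ` Inr ` B \<subseteq> left_upset a c (stack a A B)"
    using drop_Inr_in_left_upset by blast
qed

lemma left_upset_stack_nonempty: "left_upset a c (stack a A B) \<noteq> {}"
  using left_upset_stack bottom_B by auto

lemma stack_diff_left_upset: "stack a A B - left_upset a c (stack a A B) = A"
proof -
  have "S.drop ` Inl ` A = (\<lambda>x. x) ` A"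
    unfolding image_image using drop_Inl by (rule image_cong[OF refl])
  then have A: "S.drop ` Inl ` A = A" by simp
  have "stack a A B = S.drop ` Inl ` A \<union> S.drop ` Inr ` B"
    unfolding stack_eq Plus_def by (rule image_Un)
  then have stack: "stack a A B = A \<union> S.drop ` Inr ` B" by (simp only: A)
  have "S.drop ` Inl ` A \<inter> S.drop ` Inr ` B = S.drop ` (Inl ` A \<inter> Inr ` B)"
    using S.inj_on_drop by (intro inj_on_image_Int[symmetric]) (auto simp: Plus_def)
  then have "S.drop ` Inl ` A \<inter> S.drop ` Inr ` B = {}" by auto
  then have "A \<inter> S.drop ` Inr ` B = {}" by (simp only: A)
  then show ?thesis unfolding left_upset_stack by (simp add: stack Un_Diff Diff_triv)
qed

lemma settle_left_upset_stack: "settle a (left_upset a c (stack a A B)) = B"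
proof -
  have "settle a (S.drop ` Inr ` B) = settle a B"
    unfolding settle_def
  proof (rule heap_of_bij_betw)
    have "inj_on (S.drop \<circ> Inr) B"
      by (rule comp_inj_on) (auto intro: inj_on_subset[OF S.inj_on_drop])
    then have "bij_betw (S.drop \<circ> Inr) B ((S.drop \<circ> Inr) ` B)" by (rule inj_on_imp_bij_betw)
    then show "bij_betw (S.drop \<circ> Inr) B (S.drop ` Inr ` B)" by (simp only: image_comp)
    have sub: "S.drop ` Inr ` B \<subseteq> stack a A B" unfolding stack_eq by (auto simp: Plus_def)
    show "below a (S.drop ` Inr ` B) ((S.drop \<circ> Inr) x) ((S.drop \<circ> Inr) y) \<longleftrightarrow> below a B x y"
      if "x \<in> B" "y \<in> B" for x y
    proof -
      have "S.drop (Inr x) \<in> S.drop ` Inr ` B" "S.drop (Inr y) \<in> S.drop ` Inr ` B"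
        using that by blast+
      then show ?thesis using below_subset_iff[OF sub] below_stack_iff[of "Inr x" "Inr y"] that by simp
    qed
  qed simp
  then show ?thesis using left_upset_stack settle_heap[OF heap_B] by simp
qed

end

section \<open>Mirror images\<close>

definition mirror :: "int \<Rightarrow> piece \<Rightarrow> piece" where
  "mirror a x = (- fst x - a, snd x)"

lemma mirror_mirror [simp]: "mirror a (mirror a x) = x"
  by (simp add: mirror_def)

lemma mirror_image_mirror_image [simp]: "mirror a ` mirror a ` H = H"
  by (simp add: image_image)

lemma card_mirror_image [simp]: "card (mirror a ` H) = card H"
  by (rule card_image) (metis inj_onI mirror_mirror)

lemma mem_mirror_image: "(s, h) \<in> mirror a ` H \<longleftrightarrow> (- s - a, h) \<in> H"
  by (force simp: mirror_def image_iff)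

lemma concurrent_mirror: "concurrent a (- s - a) (- t - a) \<longleftrightarrow> concurrent a s t"
  by (simp add: concurrent_def abs_minus_commute)

lemma is_heap_mirror_image:
  assumes "is_heap a H"
  shows "is_heap a (mirror a ` H)"
  unfolding is_heap_def
proof (intro conjI allI impI)
  show "finite (mirror a ` H)" using assms by (simp add: is_heap_def)
next
  fix s h t k
  assume "(s, h) \<in> mirror a ` H \<and> (t, k) \<in> mirror a ` H \<and> (s, h) \<noteq> (t, k) \<and> concurrent a s t"
  then have "(- s - a, h) \<in> H" "(- t - a, k) \<in> H" "(- s - a, h) \<noteq> (- t - a, k)"
    "concurrent a (- s - a) (- t - a)"
    by (auto simp: mem_mirror_image concurrent_mirror)
  then show "h \<noteq> k" using assms unfolding is_heap_def by blast
next
  fix s h assume "(s, h) \<in> mirror a ` H \<and> 0 < h"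
  then have "(- s - a, h) \<in> H" "h > 0" by (auto simp: mem_mirror_image)
  then obtain t where t: "(t, h - 1) \<in> H" "concurrent a (- s - a) t"
    using assms unfolding is_heap_def by blast
  then have "(- t - a, h - 1) \<in> mirror a ` H" "concurrent a s (- t - a)"
    using concurrent_mirror[of a s "- t - a"] by (auto simp: mem_mirror_image)
  then show "\<exists>t. (t, h - 1) \<in> mirror a ` H \<and> concurrent a s t" by blast
qed

lemma pyramid_mirror_image:
  assumes "pyramid a H"
  shows "pyramid a (mirror a ` H)"
proof -
  obtain x where x: "x \<in> H" "snd x = 0" and unique: "\<And>y. y \<in> H \<Longrightarrow> snd y = 0 \<Longrightarrow> y = x"
    using assms unfolding pyramid_def by blast
  have "\<exists>!y. y \<in> mirror a ` H \<and> snd y = 0"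
  proof (rule ex1I[of _ "mirror a x"])
    show "mirror a x \<in> mirror a ` H \<and> snd (mirror a x) = 0" using x by (simp add: mirror_def)
    fix y assume "y \<in> mirror a ` H \<and> snd y = 0"
    then have "mirror a y = x" using unique by (auto simp: mirror_def)
    then show "y = mirror a x" by auto
  qed
  then show ?thesis using assms is_heap_mirror_image by (simp add: pyramid_def)
qed

lemma left_pyramid_mirror_image:
  assumes "right_pyramid a p s"
  shows "left_pyramid a (mirror a ` p) (- s)"
  using assms pyramid_mirror_image
  by (auto simp: right_pyramid_def left_pyramid_def mem_mirror_image)

lemma right_pyramid_mirror_image:
  assumes "left_pyramid a p s"
  shows "right_pyramid a (mirror a ` p) (- s)"
  using assms pyramid_mirror_image
  by (auto simp: right_pyramid_def left_pyramid_def mem_mirror_image)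

section \<open>The recursive decomposition of pyramids\<close>

definition pyramids_at :: "int \<Rightarrow> int \<Rightarrow> nat \<Rightarrow> heap set" where
  "pyramids_at a c n = {P. pyramid a P \<and> (c, 0) \<in> P \<and> card P = n}"

definition right_pyramids :: "int \<Rightarrow> int \<Rightarrow> nat \<Rightarrow> heap set" where
  "right_pyramids a c n = {P. right_pyramid a P c \<and> card P = n}"

definition bottom_pos :: "heap \<Rightarrow> int" where
  "bottom_pos B = (THE b. (b, 0) \<in> B)"

lemma bottom_pos_eq: "pyramid a B \<Longrightarrow> (b, 0) \<in> B \<Longrightarrow> bottom_pos B = b"
  unfolding bottom_pos_def using pyramid_bottom_unique by (intro the_equality) fastforce+

definition split_pyramid :: "int \<Rightarrow> int \<Rightarrow> heap \<Rightarrow> heap + (nat \<times> int) \<times> heap \<times> heap" where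
  "split_pyramid a c P =
    (let U = left_upset a c P
     in if U = {} then Inl P else Inr ((card (P - U), bottom_pos (settle a U)), (P - U, settle a U)))"

definition join_pyramid :: "int \<Rightarrow> heap + (nat \<times> int) \<times> heap \<times> heap \<Rightarrow> heap" where
  "join_pyramid a = case_sum id (\<lambda>(_, A, B). stack a A B)"

abbreviation pyramid_parts :: "int \<Rightarrow> int \<Rightarrow> nat \<Rightarrow> (heap + (nat \<times> int) \<times> heap \<times> heap) set" where
  "pyramid_parts a c n \<equiv> right_pyramids a c n <+>
     (SIGMA (k, b) : {1..<n} \<times> {c - a<..<c}. right_pyramids a c k \<times> pyramids_at a b (n - k))"

lemma split_pyramid_in_parts:
  assumes "a > 0" "P \<in> pyramids_at a c n"
  shows "split_pyramid a c P \<in> pyramid_parts a c n"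
proof -
  define U where "U = left_upset a c P"
  have P: "pyramid a P" "(c, 0) \<in> P" "card P = n" using assms(2) by (simp_all add: pyramids_at_def)
  show ?thesis
  proof (cases "U = {}")
    case True
    then have "right_pyramid a P c"
      using P left_upset_empty_iff[OF assms(1) P(1,2)] by (auto simp: U_def right_pyramid_def)
    with True P(3) show ?thesis by (simp add: split_pyramid_def U_def[symmetric] right_pyramids_def)
  next
    case False
    obtain b where b: "c - a < b" "b < c" "(b, 0) \<in> settle a U" "pyramid a (settle a U)"
      using pyramid_settle_left_upset[OF assms(1) P(1,2)] False by (auto simp: U_def)
    have right: "right_pyramid a (P - U) c"
      using right_pyramid_diff_left_upset[OF assms(1) P(1,2)] by (simp add: U_def)
    have "finite P" using P(1) by (simp add: pyramid_def is_heap_def)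
    moreover have "U \<subseteq> P" using left_upset_subset[OF assms(1) P(1,2)] by (simp add: U_def)
    ultimately have "card P = card (P - U) + card U" "card U > 0"
      using False card_Diff_subset[of U P] card_mono[of P U] finite_subset[of U P]
      by (auto simp: card_gt_0_iff)
    moreover have "card (P - U) \<ge> 1"
      using right card_pyramid_ge_1[of a "P - U"] unfolding right_pyramid_def by blast
    moreover have "card (settle a U) = card U"
      using card_settle_left_upset[OF assms(1) P(1,2)] by (simp add: U_def)
    ultimately show ?thesis
      using False b right P(3) bottom_pos_eq[OF b(4,3)]
      by (simp add: split_pyramid_def U_def[symmetric] right_pyramids_def pyramids_at_def)
  qed
qed

lemma join_split_pyramid:
  assumes "a > 0" "P \<in> pyramids_at a c n"
  shows "join_pyramid a (split_pyramid a c P) = P"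
  using assms stack_split_pyramid[OF assms(1)]
  by (simp add: pyramids_at_def split_pyramid_def join_pyramid_def Let_def)

lemma split_join_pyramid:
  assumes "a > 0" "d \<in> pyramid_parts a c n"
  shows "split_pyramid a c (join_pyramid a d) = d"
proof (cases d)
  case (Inl A)
  then have "right_pyramid a A c" using assms(2) by (simp add: right_pyramids_def)
  then have "left_upset a c A = {}"
    using left_upset_empty_iff[OF assms(1)] by (force simp: right_pyramid_def)
  then show ?thesis using Inl by (simp add: split_pyramid_def join_pyramid_def)
next
  case (Inr r)
  then obtain k b A B where d: "d = Inr ((k, b), (A, B))" by (metis prod.collapse)
  with assms(2) have "c - a < b" "b < c" "right_pyramid a A c" "card A = k"
    "pyramid a B" "(b, 0) \<in> B"
    by (simp_all add: right_pyramids_def pyramids_at_def)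
  note stack = left_upset_stack_nonempty[OF assms(1) this(3,5,6,1,2)]
    stack_diff_left_upset[OF assms(1) this(3,5,6,1,2)]
    settle_left_upset_stack[OF assms(1) this(3,5,6,1,2)] bottom_pos_eq[OF this(5,6)]
  with d \<open>card A = k\<close> show ?thesis by (simp add: split_pyramid_def join_pyramid_def)
qed

lemma join_pyramid_in_pyramids_at:
  assumes "a > 0" "d \<in> pyramid_parts a c n"
  shows "join_pyramid a d \<in> pyramids_at a c n"
proof (cases d)
  case (Inl A)
  with assms(2) show ?thesis
    by (auto simp: right_pyramids_def pyramids_at_def right_pyramid_def join_pyramid_def)
next
  case (Inr r)
  then obtain k b A B where d: "d = Inr ((k, b), (A, B))" by (metis prod.collapse)
  with assms(2) have "c - a < b" "b < c" "right_pyramid a A c" "card A = k"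
    "pyramid a B" "(b, 0) \<in> B" "card B = n - k" "k < n"
    by (simp_all add: right_pyramids_def pyramids_at_def)
  note stack = pyramid_stack[OF assms(1) this(3,5,6,1,2)] bottom_in_stack[OF assms(1) this(3,5,6,1,2)]
    card_stack[OF assms(1) this(3,5,6,1,2)]
  with d \<open>card A = k\<close> \<open>card B = n - k\<close> \<open>k < n\<close> show ?thesis
    by (simp add: pyramids_at_def join_pyramid_def)
qed

lemma pyramids_at_eqpoll_parts:
  assumes "a > 0"
  shows "pyramids_at a c n \<approx> pyramid_parts a c n"
  unfolding eqpoll_def
proof (rule exI, rule bij_betw_byWitness[where f' = "join_pyramid a"])
  show "\<forall>P\<in>pyramids_at a c n. join_pyramid a (split_pyramid a c P) = P"
    using join_split_pyramid[OF assms] by blast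
  show "\<forall>d\<in>pyramid_parts a c n. split_pyramid a c (join_pyramid a d) = d"
    using split_join_pyramid[OF assms] by blast
  show "split_pyramid a c ` pyramids_at a c n \<subseteq> pyramid_parts a c n"
    using split_pyramid_in_parts[OF assms] by blast
  show "join_pyramid a ` pyramid_parts a c n \<subseteq> pyramids_at a c n"
    using join_pyramid_in_pyramids_at[OF assms] by blast
qed

section \<open>The recursive decomposition of pyramid sequences\<close>

definition oriented_pyramid :: "int \<Rightarrow> bool \<Rightarrow> heap \<Rightarrow> int \<Rightarrow> bool" where
  "oriented_pyramid a r p s = (if r then right_pyramid a p s else left_pyramid a p s)"

definition oriented_step :: "int \<Rightarrow> bool \<Rightarrow> int \<Rightarrow> int \<Rightarrow> bool" where
  "oriented_step a r s s' = (if r then 1 \<le> s' - s \<and> s' - s \<le> a - 1 else 1 \<le> s - s' \<and> s - s' \<le> a - 1)"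

definition pyramid_seqs :: "int \<Rightarrow> bool \<Rightarrow> int \<Rightarrow> nat \<Rightarrow> (heap \<times> int) list set" where
  "pyramid_seqs a r c n = {xs. length xs \<ge> 1 \<and>
     (\<forall>i < length xs. oriented_pyramid a (even i = r) (fst (xs ! i)) (snd (xs ! i))) \<and>
     (\<Sum>x\<leftarrow>xs. card (fst x)) = n \<and>
     snd (xs ! 0) = c \<and>
     (\<forall>i. i + 1 < length xs \<longrightarrow> oriented_step a (even i = r) (snd (xs ! i)) (snd (xs ! (i + 1))))}"

lemma pyr_sequences_eq_pyramid_seqs: "pyr_sequences a m = pyramid_seqs a True 0 m"
  unfolding pyr_sequences_def pyramid_seqs_def oriented_pyramid_def oriented_step_def by simp

lemma card_oriented_pyramid_ge_1: "oriented_pyramid a r p s \<Longrightarrow> card p \<ge> 1"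
  unfolding oriented_pyramid_def right_pyramid_def left_pyramid_def
  using card_pyramid_ge_1 by (auto split: if_splits)

lemma pyramid_seqs_hd: "ys \<in> pyramid_seqs a r c n \<Longrightarrow> ys \<noteq> [] \<and> snd (hd ys) = c"
  unfolding pyramid_seqs_def by (cases ys) auto

lemma pyramid_seqs_size_ge_1:
  assumes "ys \<in> pyramid_seqs a r c n"
  shows "n \<ge> 1"
proof -
  obtain y zs where ys: "ys = y # zs" using pyramid_seqs_hd[OF assms] by (cases ys) auto
  with assms have "oriented_pyramid a r (fst y) (snd y)" "card (fst y) \<le> n"
    unfolding pyramid_seqs_def by (auto dest: spec[of _ 0])
  then show ?thesis using card_oriented_pyramid_ge_1 by fastforce
qed

lemma all_nth_Cons_alternating:
  "(\<forall>i < length (x # ys). P (even i = r) ((x # ys) ! i)) \<longleftrightarrow>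
    P r x \<and> (\<forall>i < length ys. P (even i = (\<not> r)) (ys ! i))"
proof -
  have "\<And>i::nat. (odd i = r) = (even i = (\<not> r))" by auto
  then show ?thesis by (simp add: All_less_Suc2)
qed

lemma all_adjacent_Cons_alternating:
  assumes "ys \<noteq> []"
  shows "(\<forall>i. i + 1 < length (x # ys) \<longrightarrow> Q (even i = r) ((x # ys) ! i) ((x # ys) ! (i + 1))) \<longleftrightarrow>
    Q r x (hd ys) \<and> (\<forall>i. i + 1 < length ys \<longrightarrow> Q (even i = (\<not> r)) (ys ! i) (ys ! (i + 1)))"
proof -
  obtain y zs where ys: "ys = y # zs" using assms by (cases ys) auto
  have odd_iff: "\<And>i::nat. (odd i = r) = (even i = (\<not> r))" by auto
  have "(\<forall>i. i + 1 < length (x # ys) \<longrightarrow> Q (even i = r) ((x # ys) ! i) ((x # ys) ! (i + 1))) \<longleftrightarrow>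
      (\<forall>i < Suc (length zs). Q (even i = r) ((x # ys) ! i) (ys ! i))"
    using ys by simp
  also have "\<dots> \<longleftrightarrow> Q r x (hd ys) \<and> (\<forall>i. i + 1 < length ys \<longrightarrow> Q (even i = (\<not> r)) (ys ! i) (ys ! (i + 1)))"
    unfolding All_less_Suc2 using ys by (simp add: odd_iff)
  finally show ?thesis .
qed

lemma Cons_in_pyramid_seqs_iff:
  "x # ys \<in> pyramid_seqs a r c n \<longleftrightarrow> snd x = c \<and> oriented_pyramid a r (fst x) (snd x) \<and>
     (if ys = [] then card (fst x) = n
      else oriented_step a r (snd x) (snd (hd ys)) \<and> card (fst x) < n \<and>
        ys \<in> pyramid_seqs a (\<not> r) (snd (hd ys)) (n - card (fst x)))"
proof (cases "ys = []")
  case True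
  then show ?thesis unfolding pyramid_seqs_def by auto
next
  case False
  note alternating = all_nth_Cons_alternating[where P = "\<lambda>r x. oriented_pyramid a r (fst x) (snd x)"]
    all_adjacent_Cons_alternating[OF False, where Q = "\<lambda>r x y. oriented_step a r (snd x) (snd y)"]
  show ?thesis
  proof
    assume xys: "x # ys \<in> pyramid_seqs a r c n"
    then have "ys \<in> pyramid_seqs a (\<not> r) (snd (hd ys)) (\<Sum>x\<leftarrow>ys. card (fst x))"
      using alternating False unfolding pyramid_seqs_def by (auto simp: hd_conv_nth Suc_le_eq)
    moreover from this have "(\<Sum>x\<leftarrow>ys. card (fst x)) \<ge> 1" by (rule pyramid_seqs_size_ge_1)
    ultimately show "snd x = c \<and> oriented_pyramid a r (fst x) (snd x) \<and>
      (if ys = [] then card (fst x) = n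
       else oriented_step a r (snd x) (snd (hd ys)) \<and> card (fst x) < n \<and>
         ys \<in> pyramid_seqs a (\<not> r) (snd (hd ys)) (n - card (fst x)))"
      using xys alternating False unfolding pyramid_seqs_def by auto
  next
    assume "snd x = c \<and> oriented_pyramid a r (fst x) (snd x) \<and>
      (if ys = [] then card (fst x) = n
       else oriented_step a r (snd x) (snd (hd ys)) \<and> card (fst x) < n \<and>
         ys \<in> pyramid_seqs a (\<not> r) (snd (hd ys)) (n - card (fst x)))"
    then show "x # ys \<in> pyramid_seqs a r c n"
      using alternating False unfolding pyramid_seqs_def by (auto simp: hd_conv_nth Suc_le_eq)
  qed
qed

definition split_seq :: "int \<Rightarrow> (heap \<times> int) list \<Rightarrow> heap + (nat \<times> int) \<times> heap \<times> (heap \<times> int) list" where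
  "split_seq a xs = (if tl xs = [] then Inl (fst (hd xs))
     else Inr ((card (fst (hd xs)), snd (hd (tl xs)) - a), (fst (hd xs), tl xs)))"

definition join_seq :: "int \<Rightarrow> heap + (nat \<times> int) \<times> heap \<times> (heap \<times> int) list \<Rightarrow> (heap \<times> int) list" where
  "join_seq c = case_sum (\<lambda>p. [(p, c)]) (\<lambda>(_, p, ys). (p, c) # ys)"

abbreviation seq_parts :: "int \<Rightarrow> int \<Rightarrow> nat \<Rightarrow> (heap + (nat \<times> int) \<times> heap \<times> (heap \<times> int) list) set" where
  "seq_parts a c n \<equiv> right_pyramids a c n <+>
     (SIGMA (k, b) : {1..<n} \<times> {c - a<..<c}.
        right_pyramids a c k \<times> pyramid_seqs a False (b + a) (n - k))"

lemma pyramid_seqs_ConsE: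
  assumes "xs \<in> pyramid_seqs a r c n"
  obtains p ys where "xs = (p, c) # ys" "(p, c) # ys \<in> pyramid_seqs a r c n"
  using pyramid_seqs_hd[OF assms] assms by (cases xs) auto

lemma split_seq_in_parts:
  assumes "xs \<in> pyramid_seqs a True c n"
  shows "split_seq a xs \<in> seq_parts a c n"
proof -
  obtain p ys where xs: "xs = (p, c) # ys" and mem: "(p, c) # ys \<in> pyramid_seqs a True c n"
    using pyramid_seqs_ConsE[OF assms] by blast
  show ?thesis
  proof (cases "ys = []")
    case True
    then show ?thesis
      using mem unfolding xs Cons_in_pyramid_seqs_iff
      by (simp add: split_seq_def right_pyramids_def oriented_pyramid_def)
  next
    case False
    then have "oriented_pyramid a True p c" "oriented_step a True c (snd (hd ys))" "card p < n"
      "ys \<in> pyramid_seqs a False (snd (hd ys)) (n - card p)"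
      using mem unfolding Cons_in_pyramid_seqs_iff by simp_all
    moreover from this have "1 \<le> card p" using card_oriented_pyramid_ge_1 by blast
    ultimately show ?thesis using False
      by (simp add: xs split_seq_def right_pyramids_def oriented_pyramid_def oriented_step_def)
  qed
qed

lemma join_split_seq:
  assumes "xs \<in> pyramid_seqs a True c n"
  shows "join_seq c (split_seq a xs) = xs"
proof -
  obtain p ys where "xs = (p, c) # ys" using pyramid_seqs_ConsE[OF assms] by blast
  then show ?thesis by (cases ys) (auto simp: split_seq_def join_seq_def)
qed

lemma split_join_seq:
  assumes "d \<in> seq_parts a c n"
  shows "split_seq a (join_seq c d) = d"
proof (cases d)
  case (Inr r)
  then obtain k b p ys where d: "d = Inr ((k, b), (p, ys))" by (metis prod.collapse)
  with assms have "card p = k" "ys \<in> pyramid_seqs a False (b + a) (n - k)"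
    by (simp_all add: right_pyramids_def)
  with d show ?thesis using pyramid_seqs_hd by (fastforce simp: split_seq_def join_seq_def)
qed (simp add: split_seq_def join_seq_def)

lemma join_seq_in_pyramid_seqs:
  assumes "d \<in> seq_parts a c n"
  shows "join_seq c d \<in> pyramid_seqs a True c n"
proof (cases d)
  case (Inl p)
  with assms show ?thesis
    by (simp add: join_seq_def Cons_in_pyramid_seqs_iff right_pyramids_def oriented_pyramid_def)
next
  case (Inr r)
  then obtain k b p ys where d: "d = Inr ((k, b), (p, ys))" by (metis prod.collapse)
  with assms have "k < n" "c - a < b" "b < c" "right_pyramid a p c" "card p = k"
    "ys \<in> pyramid_seqs a False (b + a) (n - k)"
    by (simp_all add: right_pyramids_def)
  moreover from this have "ys \<noteq> []" "snd (hd ys) = b + a" using pyramid_seqs_hd by blast+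
  ultimately show ?thesis
    using d by (simp add: join_seq_def Cons_in_pyramid_seqs_iff oriented_pyramid_def oriented_step_def)
qed

lemma pyramid_seqs_eqpoll_parts: "pyramid_seqs a True c n \<approx> seq_parts a c n"
  unfolding eqpoll_def
proof (rule exI, rule bij_betw_byWitness[where f' = "join_seq c"])
  show "\<forall>xs\<in>pyramid_seqs a True c n. join_seq c (split_seq a xs) = xs"
    using join_split_seq by blast
  show "\<forall>d\<in>seq_parts a c n. split_seq a (join_seq c d) = d"
    using split_join_seq by blast
  show "split_seq a ` pyramid_seqs a True c n \<subseteq> seq_parts a c n"
    using split_seq_in_parts by blast
  show "join_seq c ` seq_parts a c n \<subseteq> pyramid_seqs a True c n"
    using join_seq_in_pyramid_seqs by blast
qed

section \<open>Counting by mirror symmetry and induction\<close>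

definition mirror_seq :: "int \<Rightarrow> (heap \<times> int) list \<Rightarrow> (heap \<times> int) list" where
  "mirror_seq a = map (\<lambda>(p, s). (mirror a ` p, - s))"

lemma mirror_seq_mirror_seq [simp]: "mirror_seq a (mirror_seq a xs) = xs"
  by (induction xs) (auto simp: mirror_seq_def image_image)

lemma oriented_pyramid_mirror:
  "oriented_pyramid a r p s \<Longrightarrow> oriented_pyramid a (\<not> r) (mirror a ` p) (- s)"
  unfolding oriented_pyramid_def
  using left_pyramid_mirror_image right_pyramid_mirror_image by (cases r) simp_all

lemma oriented_step_mirror: "oriented_step a r s s' \<Longrightarrow> oriented_step a (\<not> r) (- s) (- s')"
  unfolding oriented_step_def by (auto split: if_splits)

lemma mirror_seq_in_pyramid_seqs:
  assumes "xs \<in> pyramid_seqs a r c n"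
  shows "mirror_seq a xs \<in> pyramid_seqs a (\<not> r) (- c) n"
proof -
  have flip: "\<And>i. (even i = (\<not> r)) = (\<not> (even i = r))" by auto
  have nth: "\<And>i. i < length xs \<Longrightarrow> mirror_seq a xs ! i = (mirror a ` fst (xs ! i), - snd (xs ! i))"
    by (simp add: mirror_seq_def case_prod_beta)
  have xs: "length xs \<ge> 1"
    "\<forall>i < length xs. oriented_pyramid a (even i = r) (fst (xs ! i)) (snd (xs ! i))"
    "(\<Sum>x\<leftarrow>xs. card (fst x)) = n" "snd (xs ! 0) = c"
    "\<forall>i. i + 1 < length xs \<longrightarrow> oriented_step a (even i = r) (snd (xs ! i)) (snd (xs ! (i + 1)))"
    using assms by (simp_all add: pyramid_seqs_def)
  have len: "length (mirror_seq a xs) = length xs" by (simp add: mirror_seq_def)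
  have "(\<Sum>x\<leftarrow>mirror_seq a xs. card (fst x)) = n"
    using xs(3) by (simp add: mirror_seq_def o_def case_prod_beta)
  moreover have "\<forall>i < length xs.
      oriented_pyramid a (even i = (\<not> r)) (fst (mirror_seq a xs ! i)) (snd (mirror_seq a xs ! i))"
  proof (intro allI impI)
    fix i assume i: "i < length xs"
    then have "oriented_pyramid a (\<not> (even i = r)) (mirror a ` fst (xs ! i)) (- snd (xs ! i))"
      using xs(2) oriented_pyramid_mirror by blast
    then show
      "oriented_pyramid a (even i = (\<not> r)) (fst (mirror_seq a xs ! i)) (snd (mirror_seq a xs ! i))"
      unfolding nth[OF i] fst_conv snd_conv flip .
  qed
  moreover have "\<forall>i. i + 1 < length xs \<longrightarrow>
      oriented_step a (even i = (\<not> r)) (snd (mirror_seq a xs ! i)) (snd (mirror_seq a xs ! (i + 1)))"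
  proof (intro allI impI)
    fix i assume i: "i + 1 < length xs"
    then have i': "i < length xs" by simp
    from i have "oriented_step a (\<not> (even i = r)) (- snd (xs ! i)) (- snd (xs ! (i + 1)))"
      using xs(5) oriented_step_mirror by blast
    then show "oriented_step a (even i = (\<not> r))
        (snd (mirror_seq a xs ! i)) (snd (mirror_seq a xs ! (i + 1)))"
      unfolding nth[OF i] nth[OF i'] snd_conv flip .
  qed
  moreover have "snd (mirror_seq a xs ! 0) = - c" using xs(1,4) nth[of 0] by (simp add: Suc_le_eq)
  ultimately show ?thesis using xs(1) unfolding pyramid_seqs_def mem_Collect_eq len by blast
qed

lemma pyramid_seqs_eqpoll_mirror: "pyramid_seqs a r c n \<approx> pyramid_seqs a (\<not> r) (- c) n"
  unfolding eqpoll_def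
proof (rule exI, rule bij_betw_byWitness[where f' = "mirror_seq a"])
  show "mirror_seq a ` pyramid_seqs a r c n \<subseteq> pyramid_seqs a (\<not> r) (- c) n"
    using mirror_seq_in_pyramid_seqs by blast
  show "mirror_seq a ` pyramid_seqs a (\<not> r) (- c) n \<subseteq> pyramid_seqs a r c n"
    using mirror_seq_in_pyramid_seqs[of _ a "\<not> r" "- c" n] by auto
qed simp_all

lemma pyramids_at_eqpoll_mirror: "pyramids_at a c n \<approx> pyramids_at a (- c - a) n"
  unfolding eqpoll_def
proof (rule exI, rule bij_betw_byWitness[where f' = "image (mirror a)"])
  show "image (mirror a) ` pyramids_at a c n \<subseteq> pyramids_at a (- c - a) n"
    and "image (mirror a) ` pyramids_at a (- c - a) n \<subseteq> pyramids_at a c n"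
    by (auto simp: pyramids_at_def mem_mirror_image pyramid_mirror_image)
qed simp_all

lemma pyramids_at_eqpoll_pyramid_seqs:
  assumes "a > 0"
  shows "pyramids_at a c n \<approx> pyramid_seqs a True c n"
proof (induction n arbitrary: c rule: less_induct)
  case (less n)
  have parts: "right_pyramids a c k \<times> pyramids_at a b (n - k)
      \<approx> right_pyramids a c k \<times> pyramid_seqs a False (b + a) (n - k)"
    if "(k, b) \<in> {1..<n} \<times> {c - a<..<c}" for k b
  proof (rule times_eqpoll_cong[OF eqpoll_refl])
    have "pyramids_at a b (n - k) \<approx> pyramids_at a (- b - a) (n - k)"
      by (rule pyramids_at_eqpoll_mirror)
    also have "\<dots> \<approx> pyramid_seqs a True (- b - a) (n - k)" using less that by simp
    also have "\<dots> \<approx> pyramid_seqs a False (b + a) (n - k)"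
      using pyramid_seqs_eqpoll_mirror[of a True "- b - a" "n - k"] by (simp add: add.commute)
    finally show "pyramids_at a b (n - k) \<approx> pyramid_seqs a False (b + a) (n - k)" .
  qed
  have "pyramids_at a c n \<approx> pyramid_parts a c n" by (rule pyramids_at_eqpoll_parts[OF assms])
  also have "\<dots> \<approx> seq_parts a c n"
  proof (rule sum_eqpoll_cong[OF eqpoll_refl], rule Sigma_eqpoll_cong[OF bij_betw_id])
    fix kb assume "kb \<in> {1..<n} \<times> {c - a<..<c}"
    then show "(case kb of (k, b) \<Rightarrow> right_pyramids a c k \<times> pyramids_at a b (n - k))
        \<approx> (case id kb of (k, b) \<Rightarrow> right_pyramids a c k \<times> pyramid_seqs a False (b + a) (n - k))"
      using parts by (cases kb) (simp only: id_apply prod.case)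
  qed
  also have "\<dots> \<approx> pyramid_seqs a True c n" by (rule eqpoll_sym[OF pyramid_seqs_eqpoll_parts])
  finally show ?case .
qed

theorem lemma4:
  fixes a :: int and m :: nat
  assumes "a \<ge> 3" and "m \<ge> 1"
  shows "\<exists>f. bij_betw f (pyramids_at0 a m) (pyr_sequences a m)"
proof -
  have "pyramids_at a 0 m \<approx> pyramid_seqs a True 0 m"
    using assms(1) by (intro pyramids_at_eqpoll_pyramid_seqs) simp
  moreover have "pyramids_at0 a m = pyramids_at a 0 m"
    by (simp add: pyramids_at0_def pyramids_at_def)
  ultimately show ?thesis by (simp add: eqpoll_def pyr_sequences_eq_pyramid_seqs)
qed

end
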